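(* If $L$ is a d-reduced $\kappa$-frame, then for every $a\in L$ the congruence $\nabla_a$ is clear; equivalently, $L/\nabla_a$ is d-reduced.
   Context: $\kappa$ is a fixed regular cardinal; a $\kappa$-frame is a bounded distributive lattice having joins of all subsets of cardinality $<\kappa$ and satisfying the frame distributive law for such joins. A $\kappa$-ideal is a downset in which every subset of cardinality $<\kappa$ has an upper bound. A congruence is an equivalence relation that is a sub-$\kappa$-frame of $L\times L$. $\nabla_a=\{(x,y)\mid x\vee a=y\vee a\}$. For a $\kappa$-ideal $I$, $\partial_I=\{(a,b)\mid\forall x\in L:\ a\wedge x\in I\iff b\wedge x\in I\}$; a congruence is clear if it equals $\partial_I$ for some $\kappa$-ideal $I$. A $\kappa$-frame $M$ is d-reduced if $\mathfrak{D}_M=\{(a,b)\mid\forall x\in M:\ a\wedge x=0\iff b\wedge x=0\}$ is the diagonal. *)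

theory Defs
  imports Main
begin

definition is_lub :: "('a \<Rightarrow> 'a \<Rightarrow> bool) \<Rightarrow> 'a set \<Rightarrow> 'a set \<Rightarrow> 'a \<Rightarrow> bool" where
  "is_lub le L S x \<longleftrightarrow> x \<in> L \<and> (\<forall>s\<in>S. le s x) \<and> (\<forall>y\<in>L. (\<forall>s\<in>S. le s y) \<longrightarrow> le x y)"

definition is_glb :: "('a \<Rightarrow> 'a \<Rightarrow> bool) \<Rightarrow> 'a set \<Rightarrow> 'a set \<Rightarrow> 'a \<Rightarrow> bool" where
  "is_glb le L S x \<longleftrightarrow> x \<in> L \<and> (\<forall>s\<in>S. le x s) \<and> (\<forall>y\<in>L. (\<forall>s\<in>S. le y s) \<longrightarrow> le y x)"

definition fJoin :: "('a \<Rightarrow> 'a \<Rightarrow> bool) \<Rightarrow> 'a set \<Rightarrow> 'a set \<Rightarrow> 'a" where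
  "fJoin le L S = (THE x. is_lub le L S x)"

definition fjoin :: "('a \<Rightarrow> 'a \<Rightarrow> bool) \<Rightarrow> 'a set \<Rightarrow> 'a \<Rightarrow> 'a \<Rightarrow> 'a" where
  "fjoin le L x y = fJoin le L {x, y}"

definition fmeet :: "('a \<Rightarrow> 'a \<Rightarrow> bool) \<Rightarrow> 'a set \<Rightarrow> 'a \<Rightarrow> 'a \<Rightarrow> 'a" where
  "fmeet le L x y = (THE z. is_glb le L {x, y} z)"

definition fbot :: "('a \<Rightarrow> 'a \<Rightarrow> bool) \<Rightarrow> 'a set \<Rightarrow> 'a" where
  "fbot le L = fJoin le L {}"

definition ftop :: "('a \<Rightarrow> 'a \<Rightarrow> bool) \<Rightarrow> 'a set \<Rightarrow> 'a" where
  "ftop le L = (THE t. is_glb le L {} t)"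

definition small :: "'k rel \<Rightarrow> 'b set \<Rightarrow> bool" where
  "small \<kappa> S \<longleftrightarrow> ordLess2 (card_of S) \<kappa>"

definition kframe :: "'k rel \<Rightarrow> 'a set \<Rightarrow> ('a \<Rightarrow> 'a \<Rightarrow> bool) \<Rightarrow> bool" where
  "kframe \<kappa> L le \<longleftrightarrow>
     (\<forall>x\<in>L. le x x) \<and>
     (\<forall>x\<in>L. \<forall>y\<in>L. le x y \<and> le y x \<longrightarrow> x = y) \<and>
     (\<forall>x\<in>L. \<forall>y\<in>L. \<forall>z\<in>L. le x y \<and> le y z \<longrightarrow> le x z) \<and>
     (\<exists>t. is_glb le L {} t) \<and>
     (\<forall>x\<in>L. \<forall>y\<in>L. \<exists>z. is_glb le L {x, y} z) \<and>
     (\<forall>S. S \<subseteq> L \<and> small \<kappa> S \<longrightarrow> (\<exists>x. is_lub le L S x)) \<and>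
     (\<forall>x\<in>L. \<forall>y\<in>L. \<forall>z\<in>L.
        fmeet le L x (fjoin le L y z) = fjoin le L (fmeet le L x y) (fmeet le L x z)) \<and>
     (\<forall>a\<in>L. \<forall>S. S \<subseteq> L \<and> small \<kappa> S \<longrightarrow>
        fmeet le L a (fJoin le L S) = fJoin le L ((\<lambda>s. fmeet le L a s) ` S))"

text \<open>Congruence: an equivalence relation on L that is a sub-kappa-frame of L x L
  (closed under componentwise kappa-joins, binary meets and top; bottom = empty join).\<close>
definition kcongruence :: "'k rel \<Rightarrow> 'a set \<Rightarrow> ('a \<Rightarrow> 'a \<Rightarrow> bool) \<Rightarrow> 'a rel \<Rightarrow> bool" where
  "kcongruence \<kappa> L le \<theta> \<longleftrightarrow>
     equiv L \<theta> \<and>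
     (ftop le L, ftop le L) \<in> \<theta> \<and>
     (\<forall>p\<in>\<theta>. \<forall>q\<in>\<theta>. (fmeet le L (fst p) (fst q), fmeet le L (snd p) (snd q)) \<in> \<theta>) \<and>
     (\<forall>S. S \<subseteq> \<theta> \<and> small \<kappa> S \<longrightarrow> (fJoin le L (fst ` S), fJoin le L (snd ` S)) \<in> \<theta>)"

definition nabla :: "('a \<Rightarrow> 'a \<Rightarrow> bool) \<Rightarrow> 'a set \<Rightarrow> 'a \<Rightarrow> 'a rel" where
  "nabla le L a = {(x, y). x \<in> L \<and> y \<in> L \<and> fjoin le L x a = fjoin le L y a}"

definition kideal :: "'k rel \<Rightarrow> 'a set \<Rightarrow> ('a \<Rightarrow> 'a \<Rightarrow> bool) \<Rightarrow> 'a set \<Rightarrow> bool" where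
  "kideal \<kappa> L le I \<longleftrightarrow> I \<subseteq> L \<and>
     (\<forall>x\<in>I. \<forall>y\<in>L. le y x \<longrightarrow> y \<in> I) \<and>
     (\<forall>S. S \<subseteq> I \<and> small \<kappa> S \<longrightarrow> (\<exists>u\<in>I. \<forall>s\<in>S. le s u))"

definition partialI :: "('a \<Rightarrow> 'a \<Rightarrow> bool) \<Rightarrow> 'a set \<Rightarrow> 'a set \<Rightarrow> 'a rel" where
  "partialI le L I = {(a, b). a \<in> L \<and> b \<in> L \<and>
      (\<forall>x\<in>L. fmeet le L a x \<in> I \<longleftrightarrow> fmeet le L b x \<in> I)}"

definition clear :: "'k rel \<Rightarrow> 'a set \<Rightarrow> ('a \<Rightarrow> 'a \<Rightarrow> bool) \<Rightarrow> 'a rel \<Rightarrow> bool" where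
  "clear \<kappa> L le \<theta> \<longleftrightarrow> (\<exists>I. kideal \<kappa> L le I \<and> \<theta> = partialI le L I)"

definition dcong :: "('a \<Rightarrow> 'a \<Rightarrow> bool) \<Rightarrow> 'a set \<Rightarrow> 'a rel" where
  "dcong le M = {(a, b). a \<in> M \<and> b \<in> M \<and>
      (\<forall>x\<in>M. fmeet le M a x = fbot le M \<longleftrightarrow> fmeet le M b x = fbot le M)}"

definition d_reduced :: "('a \<Rightarrow> 'a \<Rightarrow> bool) \<Rightarrow> 'a set \<Rightarrow> bool" where
  "d_reduced le M \<longleftrightarrow> dcong le M = Id_on M"

text \<open>Quotient kappa-frame L/theta: carrier the equivalence classes, [x] <= [y] iff (x /\ y) theta x.\<close>
definition quot_le :: "('a \<Rightarrow> 'a \<Rightarrow> bool) \<Rightarrow> 'a set \<Rightarrow> 'a rel \<Rightarrow> 'a set \<Rightarrow> 'a set \<Rightarrow> bool" where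
  "quot_le le L \<theta> A B \<longleftrightarrow> (\<exists>x\<in>A. \<exists>y\<in>B. (fmeet le L x y, x) \<in> \<theta>)"

end

theory Submission
  imports Defs
begin

text \<open>Write \<open>\<down>a\<close> for the principal ideal of \<open>a\<close>. Distributivity gives
  \<open>(x \<or> a) \<and> w = 0\<close> iff \<open>x \<and> w \<le> a\<close> and \<open>a \<and> w = 0\<close>. So if \<open>x\<close> and \<open>y\<close> are
  \<open>\<partial>\<^sub>\<down>\<^sub>a\<close>-related, then \<open>x \<or> a\<close> and \<open>y \<or> a\<close> are d-related, hence equal in a d-reduced
  frame; conversely \<open>\<nabla>\<^sub>a \<subseteq> \<partial>\<^sub>\<down>\<^sub>a\<close> in every distributive lattice. Thus \<open>\<nabla>\<^sub>a = \<partial>\<^sub>\<down>\<^sub>a\<close>.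
  In \<open>L/\<nabla>\<^sub>a\<close> we have \<open>[x] \<le> [y]\<close> iff \<open>x \<or> a \<le> y \<or> a\<close>, meets are computed on
  representatives and the bottom class is \<open>\<down>a\<close>, so d-equivalence of the quotient pulls back
  to \<open>\<partial>\<^sub>\<down>\<^sub>a = \<nabla>\<^sub>a\<close>.\<close>

lemma small_if_finite: "Cinfinite \<kappa> \<Longrightarrow> finite S \<Longrightarrow> small \<kappa> S"
  unfolding small_def
  by (rule Cfinite_ordLess_Cinfinite) (auto simp: cfinite_def Field_card_of card_of_card_order_on)

lemma fmeet_eqI:
  assumes "\<And>u v. u \<in> M \<Longrightarrow> v \<in> M \<Longrightarrow> R u v \<Longrightarrow> R v u \<Longrightarrow> u = v"
    and "is_glb R M {x, y} g"
  shows "fmeet R M x y = g"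
  unfolding fmeet_def using assms by (intro the_equality) (auto simp: is_glb_def)

lemma fbot_eqI:
  assumes "\<And>u v. u \<in> M \<Longrightarrow> v \<in> M \<Longrightarrow> R u v \<Longrightarrow> R v u \<Longrightarrow> u = v"
    and "is_lub R M {} g"
  shows "fbot R M = g"
  unfolding fbot_def fJoin_def using assms by (intro the_equality) (auto simp: is_lub_def)

locale kappa_frame =
  fixes \<kappa> :: "'k rel" and L :: "'a set" and le :: "'a \<Rightarrow> 'a \<Rightarrow> bool"
  assumes Cinfinite_kappa: "Cinfinite \<kappa>" and kframe: "kframe \<kappa> L le"
begin

abbreviation "meet \<equiv> fmeet le L"
abbreviation "join \<equiv> fjoin le L"
abbreviation "bottom \<equiv> fbot le L"

lemma le_refl: "x \<in> L \<Longrightarrow> le x x"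
  using kframe unfolding kframe_def by (elim conjE) blast

lemma le_antisym: "x \<in> L \<Longrightarrow> y \<in> L \<Longrightarrow> le x y \<Longrightarrow> le y x \<Longrightarrow> x = y"
  using kframe unfolding kframe_def by (elim conjE) blast

lemma le_trans: "x \<in> L \<Longrightarrow> y \<in> L \<Longrightarrow> z \<in> L \<Longrightarrow> le x y \<Longrightarrow> le y z \<Longrightarrow> le x z"
  using kframe unfolding kframe_def by (elim conjE) blast

lemma ex_glb_pair: "x \<in> L \<Longrightarrow> y \<in> L \<Longrightarrow> \<exists>z. is_glb le L {x, y} z"
  using kframe unfolding kframe_def by (elim conjE) blast

lemma ex_lub_small: "S \<subseteq> L \<Longrightarrow> small \<kappa> S \<Longrightarrow> \<exists>z. is_lub le L S z"
  using kframe unfolding kframe_def by (elim conjE) blast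

lemma meet_join_distrib:
  "x \<in> L \<Longrightarrow> y \<in> L \<Longrightarrow> z \<in> L \<Longrightarrow> meet x (join y z) = join (meet x y) (meet x z)"
  using kframe unfolding kframe_def by (elim conjE) blast

lemma is_lub_unique: "is_lub le L S x \<Longrightarrow> is_lub le L S y \<Longrightarrow> x = y"
  unfolding is_lub_def using le_antisym by blast

lemma is_glb_unique: "is_glb le L S x \<Longrightarrow> is_glb le L S y \<Longrightarrow> x = y"
  unfolding is_glb_def using le_antisym by blast

lemma is_glb_meet: "x \<in> L \<Longrightarrow> y \<in> L \<Longrightarrow> is_glb le L {x, y} (meet x y)"
  unfolding fmeet_def using ex_glb_pair is_glb_unique by (metis theI)

lemma is_lub_fJoin: "S \<subseteq> L \<Longrightarrow> small \<kappa> S \<Longrightarrow> is_lub le L S (fJoin le L S)"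
  unfolding fJoin_def using ex_lub_small is_lub_unique by (metis theI)

lemma is_lub_join: "x \<in> L \<Longrightarrow> y \<in> L \<Longrightarrow> is_lub le L {x, y} (join x y)"
  unfolding fjoin_def by (simp add: is_lub_fJoin small_if_finite[OF Cinfinite_kappa])

lemma is_lub_bottom: "is_lub le L {} bottom"
  unfolding fbot_def by (simp add: is_lub_fJoin small_if_finite[OF Cinfinite_kappa])

lemma meet_closed: "x \<in> L \<Longrightarrow> y \<in> L \<Longrightarrow> meet x y \<in> L"
  and meet_lower: "x \<in> L \<Longrightarrow> y \<in> L \<Longrightarrow> le (meet x y) x \<and> le (meet x y) y"
  and meet_greatest: "x \<in> L \<Longrightarrow> y \<in> L \<Longrightarrow> z \<in> L \<Longrightarrow> le z x \<Longrightarrow> le z y \<Longrightarrow> le z (meet x y)"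
  using is_glb_meet[of x y] unfolding is_glb_def by simp_all

lemma join_closed: "x \<in> L \<Longrightarrow> y \<in> L \<Longrightarrow> join x y \<in> L"
  and join_upper: "x \<in> L \<Longrightarrow> y \<in> L \<Longrightarrow> le x (join x y) \<and> le y (join x y)"
  and join_least: "x \<in> L \<Longrightarrow> y \<in> L \<Longrightarrow> z \<in> L \<Longrightarrow> le x z \<Longrightarrow> le y z \<Longrightarrow> le (join x y) z"
  using is_lub_join[of x y] unfolding is_lub_def by simp_all

lemma bottom_closed: "bottom \<in> L"
  and bottom_least: "x \<in> L \<Longrightarrow> le bottom x"
  using is_lub_bottom unfolding is_lub_def by simp_all

lemmas closed = meet_closed join_closed bottom_closed

lemma le_meet_iff: "x \<in> L \<Longrightarrow> y \<in> L \<Longrightarrow> z \<in> L \<Longrightarrow> le z (meet x y) \<longleftrightarrow> le z x \<and> le z y"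
  by (meson closed le_trans meet_greatest meet_lower)

lemma join_le_iff: "x \<in> L \<Longrightarrow> y \<in> L \<Longrightarrow> z \<in> L \<Longrightarrow> le (join x y) z \<longleftrightarrow> le x z \<and> le y z"
  by (meson closed le_trans join_least join_upper)

lemma meet_commute: "meet x y = meet y x"
  unfolding fmeet_def by (simp add: insert_commute)

lemma meet_eq_left_iff: "x \<in> L \<Longrightarrow> y \<in> L \<Longrightarrow> meet x y = x \<longleftrightarrow> le x y"
  by (metis le_antisym le_meet_iff le_refl meet_closed meet_lower)

lemma join_eq_right_iff: "x \<in> L \<Longrightarrow> y \<in> L \<Longrightarrow> join x y = y \<longleftrightarrow> le x y"
  by (metis le_antisym join_le_iff le_refl join_closed join_upper)

lemma eq_bottom_iff: "x \<in> L \<Longrightarrow> x = bottom \<longleftrightarrow> le x bottom"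
  using le_antisym bottom_closed bottom_least le_refl by blast

lemma bottom_join: "x \<in> L \<Longrightarrow> join bottom x = x"
  by (simp add: join_eq_right_iff bottom_least closed)

lemma join_eq_bottom_iff: "x \<in> L \<Longrightarrow> y \<in> L \<Longrightarrow> join x y = bottom \<longleftrightarrow> x = bottom \<and> y = bottom"
  by (simp add: eq_bottom_iff join_le_iff closed)

lemma join_meet_right_distrib:
  "x \<in> L \<Longrightarrow> a \<in> L \<Longrightarrow> w \<in> L \<Longrightarrow> meet (join x a) w = join (meet x w) (meet a w)"
  using meet_join_distrib meet_commute by metis

lemma meet_mono_left:
  assumes "x \<in> L" "x' \<in> L" "w \<in> L" "le x x'"
  shows "le (meet x w) (meet x' w)"
proof -
  have "le (meet x w) x'"
    using assms le_trans[of "meet x w" x x'] by (simp add: meet_lower closed)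
  then show ?thesis
    using assms by (simp add: meet_greatest meet_lower closed)
qed

lemma meet_join_absorb: "x \<in> L \<Longrightarrow> y \<in> L \<Longrightarrow> meet x (join y x) = x"
  by (simp add: meet_eq_left_iff join_upper closed)

lemma join_meet_distrib:
  assumes x: "x \<in> L" and y: "y \<in> L" and a: "a \<in> L"
  shows "join (meet x y) a = meet (join x a) (join y a)"
proof (rule le_antisym)
  have "meet (join x a) (join y a) = join (meet x (join y a)) (meet a (join y a))"
    using x y a by (simp add: join_meet_right_distrib closed)
  also have "\<dots> = join (join (meet x y) (meet x a)) a"
    using x y a by (simp add: meet_join_distrib[OF x y a] meet_join_absorb)
  moreover have "le (meet x a) (join (meet x y) a)"
    using x y a le_trans meet_lower join_upper closed by meson
  ultimately show "le (meet (join x a) (join y a)) (join (meet x y) a)"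
    using x y a by (simp add: join_le_iff join_upper closed)
  have "le (meet x y) (join x a)" "le (meet x y) (join y a)"
    using x y a le_trans meet_lower join_upper closed by meson+
  then show "le (join (meet x y) a) (meet (join x a) (join y a))"
    using x y a by (simp add: join_le_iff le_meet_iff join_upper closed)
qed (use x y a in \<open>simp_all add: closed\<close>)

lemma kideal_downset: "a \<in> L \<Longrightarrow> kideal \<kappa> L le {x \<in> L. le x a}"
  unfolding kideal_def using le_trans le_refl by blast

lemma join_meet_eq_bottom_iff:
  assumes x: "x \<in> L" and a: "a \<in> L" and w: "w \<in> L"
  shows "meet (join x a) w = bottom \<longleftrightarrow> le (meet x w) a \<and> meet a w = bottom"
proof -
  have "meet (join x a) w = bottom \<longleftrightarrow> meet x w = bottom \<and> meet a w = bottom"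
    using x a w by (simp add: join_meet_right_distrib join_eq_bottom_iff closed)
  also have "\<dots> \<longleftrightarrow> le (meet x w) a \<and> meet a w = bottom"
  proof
    assume "le (meet x w) a \<and> meet a w = bottom"
    moreover from this have "le (meet x w) (meet a w)"
      using x a w by (intro meet_greatest) (auto simp: meet_lower closed)
    ultimately show "meet x w = bottom \<and> meet a w = bottom"
      using x w eq_bottom_iff[of "meet x w"] by (simp add: closed)
  qed (use a bottom_least in simp)
  finally show ?thesis .
qed

lemma meet_le_if_join_eq:
  assumes x: "x \<in> L" and y: "y \<in> L" and a: "a \<in> L" and w: "w \<in> L"
    and eq: "join x a = join y a" and le_a: "le (meet x w) a"
  shows "le (meet y w) a"
proof -
  have "le (meet y w) (meet (join y a) w)"
    using y a w by (simp add: meet_mono_left join_upper closed)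
  moreover have "meet (join y a) w = join (meet x w) (meet a w)"
    using x a w by (simp add: join_meet_right_distrib flip: eq)
  moreover have "le (join (meet x w) (meet a w)) a"
    using x a w le_a by (simp add: join_le_iff meet_lower closed)
  ultimately show ?thesis
    using le_trans[of "meet y w" "meet (join y a) w" a] x y a w by (simp add: closed)
qed

lemma nabla_eq_partialI_downset:
  assumes dr: "d_reduced le L" and a: "a \<in> L"
  shows "nabla le L a = partialI le L {x \<in> L. le x a}"
proof (rule set_eqI, clarify)
  fix x y
  show "(x, y) \<in> nabla le L a \<longleftrightarrow> (x, y) \<in> partialI le L {x \<in> L. le x a}"
  proof
    assume "(x, y) \<in> nabla le L a"
    then have x: "x \<in> L" and y: "y \<in> L" and eq: "join x a = join y a"
      unfolding nabla_def by auto
    then show "(x, y) \<in> partialI le L {x \<in> L. le x a}"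
      unfolding partialI_def
      using meet_le_if_join_eq[OF x y a _ eq] meet_le_if_join_eq[OF y x a _ eq[symmetric]]
      by (auto simp: closed)
  next
    assume xy: "(x, y) \<in> partialI le L {x \<in> L. le x a}"
    then have x: "x \<in> L" and y: "y \<in> L"
      unfolding partialI_def by simp_all
    have same: "\<And>w. w \<in> L \<Longrightarrow> le (meet x w) a \<longleftrightarrow> le (meet y w) a"
      using xy x y unfolding partialI_def by (simp add: closed)
    have "(join x a, join y a) \<in> dcong le L"
      unfolding dcong_def using x y a same by (simp add: join_meet_eq_bottom_iff closed)
    then have "join x a = join y a"
      using dr unfolding d_reduced_def by auto
    then show "(x, y) \<in> nabla le L a"
      unfolding nabla_def using x y by simp
  qed
qed

lemma equiv_nabla: "equiv L (nabla le L a)"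
  unfolding equiv_def refl_on_def sym_def trans_def nabla_def by auto

context
  fixes a assumes a: "a \<in> L"
begin

abbreviation "cls x \<equiv> nabla le L a `` {x}"
abbreviation "qle \<equiv> quot_le le L (nabla le L a)"
abbreviation "Q \<equiv> L // nabla le L a"

lemma class_eq_iff: "x \<in> L \<Longrightarrow> y \<in> L \<Longrightarrow> cls x = cls y \<longleftrightarrow> join x a = join y a"
  using eq_equiv_class_iff[OF equiv_nabla] unfolding nabla_def by auto

lemma quot_le_class_iff:
  assumes x: "x \<in> L" and y: "y \<in> L"
  shows "qle (cls x) (cls y) \<longleftrightarrow> le (join x a) (join y a)"
proof -
  have meet_nabla_iff: "(meet x' y', x') \<in> nabla le L a \<longleftrightarrow> le (join x' a) (join y' a)"
    if "x' \<in> L" "y' \<in> L" for x' y'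
    using that a by (simp add: nabla_def join_meet_distrib meet_eq_left_iff closed)
  show ?thesis
  proof
    assume "qle (cls x) (cls y)"
    then obtain x' y' where "x' \<in> cls x" "y' \<in> cls y" and "(meet x' y', x') \<in> nabla le L a"
      unfolding quot_le_def by blast
    moreover from \<open>x' \<in> cls x\<close> \<open>y' \<in> cls y\<close>
    have "x' \<in> L" "y' \<in> L" "join x a = join x' a" "join y a = join y' a"
      by (simp_all add: nabla_def)
    ultimately show "le (join x a) (join y a)"
      by (simp add: meet_nabla_iff)
  next
    assume "le (join x a) (join y a)"
    then have "(meet x y, x) \<in> nabla le L a"
      using x y by (simp add: meet_nabla_iff)
    moreover have "x \<in> cls x" "y \<in> cls y"
      using x y by (simp_all add: nabla_def)
    ultimately show "qle (cls x) (cls y)"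
      unfolding quot_le_def by blast
  qed
qed

lemma quotient_cases: "A \<in> Q \<Longrightarrow> (\<And>x. x \<in> L \<Longrightarrow> A = cls x \<Longrightarrow> P) \<Longrightarrow> P"
  by (erule quotientE)

lemma quot_le_antisym: "A \<in> Q \<Longrightarrow> B \<in> Q \<Longrightarrow> qle A B \<Longrightarrow> qle B A \<Longrightarrow> A = B"
  by (elim quotient_cases) (simp add: quot_le_class_iff class_eq_iff le_antisym a closed)

lemma quot_meet_class:
  assumes x: "x \<in> L" and y: "y \<in> L"
  shows "fmeet qle Q (cls x) (cls y) = cls (meet x y)"
proof (rule fmeet_eqI)
  show "\<And>A B. A \<in> Q \<Longrightarrow> B \<in> Q \<Longrightarrow> qle A B \<Longrightarrow> qle B A \<Longrightarrow> A = B"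
    by (rule quot_le_antisym)
  have join_meet: "join (meet x y) a = meet (join x a) (join y a)"
    using x y a by (rule join_meet_distrib)
  show "is_glb qle Q {cls x, cls y} (cls (meet x y))"
    unfolding is_glb_def
  proof (intro conjI ballI impI)
    show "cls (meet x y) \<in> Q"
      using x y by (simp add: quotientI closed)
    show "qle (cls (meet x y)) s" if "s \<in> {cls x, cls y}" for s
      using that x y a by (auto simp: quot_le_class_iff join_meet meet_lower closed)
    show "qle C (cls (meet x y))" if "C \<in> Q" and "\<forall>s\<in>{cls x, cls y}. qle C s" for C
      using that(1)
    proof (rule quotient_cases)
      fix z assume "z \<in> L" and "C = cls z"
      then show ?thesis
        using that(2) x y a by (simp add: quot_le_class_iff join_meet le_meet_iff closed)
    qed
  qed
qed

lemma quot_bottom_class: "fbot qle Q = cls bottom"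
proof (rule fbot_eqI)
  show "\<And>A B. A \<in> Q \<Longrightarrow> B \<in> Q \<Longrightarrow> qle A B \<Longrightarrow> qle B A \<Longrightarrow> A = B"
    by (rule quot_le_antisym)
  show "is_lub qle Q {} (cls bottom)"
    unfolding is_lub_def
  proof (intro conjI ballI impI)
    show "cls bottom \<in> Q"
      by (simp add: quotientI closed)
    show "qle (cls bottom) C" if "C \<in> Q" for C
      using that
    proof (rule quotient_cases)
      fix z assume "z \<in> L" and "C = cls z"
      then show ?thesis
        using a by (simp add: quot_le_class_iff bottom_join join_upper closed)
    qed
  qed simp
qed

lemma class_eq_bottom_iff: "u \<in> L \<Longrightarrow> cls u = cls bottom \<longleftrightarrow> le u a"
  using a by (simp add: class_eq_iff bottom_join join_eq_right_iff closed)

lemma d_reduced_quotient: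
  assumes dr: "d_reduced le L"
  shows "d_reduced qle Q"
  unfolding d_reduced_def
proof (intro set_eqI iffI; clarify)
  fix A B assume AB: "(A, B) \<in> dcong qle Q"
  then have "A \<in> Q" "B \<in> Q"
    unfolding dcong_def by simp_all
  then obtain x y where x: "x \<in> L" "A = cls x" and y: "y \<in> L" "B = cls y"
    by (meson quotient_cases)
  have "le (meet x w) a \<longleftrightarrow> le (meet y w) a" if w: "w \<in> L" for w
  proof -
    have "fmeet qle Q A (cls w) = fbot qle Q \<longleftrightarrow> fmeet qle Q B (cls w) = fbot qle Q"
      using AB quotientI[of w L "nabla le L a"] w unfolding dcong_def by blast
    then show ?thesis
      using x y w by (simp add: quot_meet_class quot_bottom_class class_eq_bottom_iff closed)
  qed
  then have "(x, y) \<in> nabla le L a"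
    using x y a by (simp add: nabla_eq_partialI_downset[OF dr] partialI_def closed)
  then have "A = B"
    using x y class_eq_iff[of x y] by (simp add: nabla_def)
  then show "(A, B) \<in> Id_on Q"
    using \<open>A \<in> Q\<close> by (simp add: Id_on_iff)
qed (auto simp: dcong_def)

end

end

theorem mainTheorem17:
  fixes \<kappa> :: "'k rel" and L :: "'a set" and le :: "'a \<Rightarrow> 'a \<Rightarrow> bool" and a :: 'a
  assumes "Card_order \<kappa>" and "Cinfinite \<kappa>" and "regularCard \<kappa>"
    and "kframe \<kappa> L le"
    and "d_reduced le L"
    and "a \<in> L"
  shows "clear \<kappa> L le (nabla le L a)
     \<and> d_reduced (quot_le le L (nabla le L a)) (L // nabla le L a)"
proof -
  interpret kappa_frame \<kappa> L le
    using assms(2,4) by unfold_locales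
  have "nabla le L a = partialI le L {x \<in> L. le x a}"
    using assms(5,6) by (rule nabla_eq_partialI_downset)
  then have "clear \<kappa> L le (nabla le L a)"
    unfolding clear_def using kideal_downset[OF assms(6)] by blast
  moreover have "d_reduced (quot_le le L (nabla le L a)) (L // nabla le L a)"
    using assms(6,5) by (rule d_reduced_quotient)
  ultimately show ?thesis ..
qed

end
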